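(* Let $U=\{u_1,\dots,u_{3n}\}$ with $n\ge1$ and let $\mathcal{S}=\{S_1,\dots,S_p\}$, $p\ge 1$, be a family of $3$-element subsets of $U$. Fix an integer $m\ge 6n+3p$. Build the labeled complete bipartite graph $G$ with partite sets $V_1=\{x_1,\dots,x_{3n}\}\cup\{x(S_1),\dots,x(S_p)\}$ and $V_2=\{y_1,\dots,y_{3n}\}\cup\{y_k(S_i):1\le i\le p,\,1\le k\le m\}\cup\{z_1,\dots,z_{3n}\}$, with labels: $x_iy_j$ is $+$ iff $i=j$ or $u_i,u_j$ lie in a common member of $\mathcal{S}$; $x(S_i)y_k(S_\ell)$ is $+$ iff $i=\ell$; $x_iy_k(S_j)$ and $x(S_j)y_i$ are $+$ iff $u_i\in S_j$; $x_iz_j$ is $+$ for all $i,j$; $x(S_i)z_j$ is $-$ for all $i,j$. Assign tolerances $t_{x(S_i)}=3$ and $t_{x_i}=m(d(u_i)-1)+(c(u_i)-2)+(3n-3)$, where $d(u_i)$ is the number of members of $\mathcal{S}$ containing $u_i$ and $c(u_i)$ is the number of $u_j\in U\setminus\{u_i\}$ lying in a common member of $\mathcal{S}$ with $u_i$. Suppose $G$ has a clustering in which each $v\in V_1$ has at most $t_v$ incident errors. Then for any $i\neq j$, the vertices $x(S_i)$ and $x(S_j)$ lie in different clusters.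
   Context: A clustering is a partition of $V(G)$. An error at a vertex $v$ is an incident edge that is a $+$ edge between different clusters or a $-$ edge within a cluster. *)

theory Defs
  imports Main "HOL-Library.Disjoint_Sets"
begin

text \<open>Indices are 1-based as in the paper:
  X i = x_i, XS i = x(S_i), Y j = y_j, YS i k = y_k(S_i), Z j = z_j.
  The ground set U = {u_1,...,u_{3n}} is identified with {1..3n}, and the
  family is given by S :: nat => nat set on indices {1..p}.\<close>
datatype vtx = X nat | XS nat | Y nat | YS nat nat | Z nat

definition V1 :: "nat \<Rightarrow> nat \<Rightarrow> vtx set" where
  "V1 n p = X ` {1..3*n} \<union> XS ` {1..p}"

definition V2 :: "nat \<Rightarrow> nat \<Rightarrow> nat \<Rightarrow> vtx set" where
  "V2 n p m = Y ` {1..3*n} \<union> {YS i k | i k. i \<in> {1..p} \<and> k \<in> {1..m}} \<union> Z ` {1..3*n}"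

fun plus_edge :: "(nat \<Rightarrow> nat set) \<Rightarrow> nat \<Rightarrow> vtx \<Rightarrow> vtx \<Rightarrow> bool" where
  "plus_edge S p (X i) (Y j) = (i = j \<or> (\<exists>l\<in>{1..p}. i \<in> S l \<and> j \<in> S l))"
| "plus_edge S p (XS i) (YS l k) = (i = l)"
| "plus_edge S p (X i) (YS j k) = (i \<in> S j)"
| "plus_edge S p (XS j) (Y i) = (i \<in> S j)"
| "plus_edge S p (X i) (Z j) = True"
| "plus_edge S p (XS i) (Z j) = False"
| "plus_edge S p _ _ = False"

definition same_cluster :: "vtx set set \<Rightarrow> vtx \<Rightarrow> vtx \<Rightarrow> bool" where
  "same_cluster P u v = (\<exists>C\<in>P. u \<in> C \<and> v \<in> C)"

text \<open>Number of errors at a vertex v of V1 (its incident edges are exactly those to V2).\<close>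
definition errors :: "(nat \<Rightarrow> nat set) \<Rightarrow> nat \<Rightarrow> nat \<Rightarrow> nat \<Rightarrow> vtx set set \<Rightarrow> vtx \<Rightarrow> nat" where
  "errors S n p m P v = card {w \<in> V2 n p m.
      (plus_edge S p v w \<and> \<not> same_cluster P v w) \<or> (\<not> plus_edge S p v w \<and> same_cluster P v w)}"

definition dg :: "(nat \<Rightarrow> nat set) \<Rightarrow> nat \<Rightarrow> nat \<Rightarrow> nat" where
  "dg S p u = card {i \<in> {1..p}. u \<in> S i}"

definition cdeg :: "(nat \<Rightarrow> nat set) \<Rightarrow> nat \<Rightarrow> nat \<Rightarrow> nat \<Rightarrow> nat" where
  "cdeg S n p u = card {v \<in> {1..3*n}. v \<noteq> u \<and> (\<exists>i\<in>{1..p}. u \<in> S i \<and> v \<in> S i)}"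

fun tol :: "(nat \<Rightarrow> nat set) \<Rightarrow> nat \<Rightarrow> nat \<Rightarrow> nat \<Rightarrow> vtx \<Rightarrow> int" where
  "tol S n p m (XS i) = 3"
| "tol S n p m (X i) = int m * (int (dg S p i) - 1) + (int (cdeg S n p i) - 2) + (3 * int n - 3)"
| "tol S n p m _ = 0"

end

theory Submission
  imports Defs
begin

text \<open>The m vertices y_k(S_i) are joined by + edges to x(S_i) and by - edges to x(S_j).
  If x(S_i) and x(S_j) shared a cluster, each y_k(S_i) would be an error at x(S_i) when it lies
  outside that cluster and an error at x(S_j) when it lies inside. Hence the two vertices would
  carry at least m > 6 errors together, more than their tolerances 3 + 3 allow.\<close>

lemma finite_V2: "finite (V2 n p m)"
proof -
  have "{YS i k | i k. i \<in> {1..p} \<and> k \<in> {1..m}} = (\<lambda>(i, k). YS i k) ` ({1..p} \<times> {1..m})"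
    by auto
  then show ?thesis
    unfolding V2_def by auto
qed

lemma YS_in_V2: "i \<in> {1..p} \<Longrightarrow> k \<in> {1..m} \<Longrightarrow> YS i k \<in> V2 n p m"
  unfolding V2_def by blast

lemma same_cluster_iff_mem:
  assumes "disjoint P" and "C \<in> P" and "u \<in> C"
  shows "same_cluster P u w \<longleftrightarrow> w \<in> C"
  using assms disjointD[OF assms(1)] unfolding same_cluster_def by blast

lemma card_le_errors:
  assumes "W \<subseteq> V2 n p m"
    and "\<And>w. w \<in> W \<Longrightarrow> plus_edge S p v w \<noteq> same_cluster P v w"
  shows "card W \<le> errors S n p m P v"
  unfolding errors_def
  by (rule card_mono) (use assms finite_V2 in auto)

lemma errors_XS_same_cluster:
  assumes "disjoint P" and "C \<in> P" and "XS i \<in> C" and "XS j \<in> C"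
    and "i \<in> {1..p}" and "i \<noteq> j"
  shows "m \<le> errors S n p m P (XS i) + errors S n p m P (XS j)"
proof -
  define inside where "inside = {k \<in> {1..m}. YS i k \<in> C}"
  define outside where "outside = {k \<in> {1..m}. YS i k \<notin> C}"
  have inj: "inj_on (YS i) K" for K
    by (auto simp: inj_on_def)
  have "card (YS i ` outside) \<le> errors S n p m P (XS i)"
  proof (rule card_le_errors)
    show "YS i ` outside \<subseteq> V2 n p m"
      using assms(5) by (auto simp: outside_def YS_in_V2)
    fix w assume "w \<in> YS i ` outside"
    then show "plus_edge S p (XS i) w \<noteq> same_cluster P (XS i) w"
      using same_cluster_iff_mem[OF assms(1-3)] by (auto simp: outside_def)
  qed
  moreover have "card (YS i ` inside) \<le> errors S n p m P (XS j)"
  proof (rule card_le_errors)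
    show "YS i ` inside \<subseteq> V2 n p m"
      using assms(5) by (auto simp: inside_def YS_in_V2)
    fix w assume "w \<in> YS i ` inside"
    then show "plus_edge S p (XS j) w \<noteq> same_cluster P (XS j) w"
      using same_cluster_iff_mem[OF assms(1,2,4)] assms(6) by (auto simp: inside_def)
  qed
  moreover have "card inside + card outside = m"
  proof -
    have "inside \<union> outside = {1..m}" "inside \<inter> outside = {}"
      unfolding inside_def outside_def by auto
    then show ?thesis
      by (metis card_Un_disjoint card_atLeastAtMost diff_Suc_1 finite_Un finite_atLeastAtMost)
  qed
  ultimately show ?thesis
    by (simp add: card_image[OF inj])
qed

theorem lemma3:
  fixes n p m :: nat and S :: "nat \<Rightarrow> nat set" and P :: "vtx set set" and i j :: nat
  assumes "n \<ge> 1" and "p \<ge> 1"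
    and "\<forall>l\<in>{1..p}. S l \<subseteq> {1..3*n} \<and> card (S l) = 3"
    and "inj_on S {1..p}"
    and "m \<ge> 6*n + 3*p"
    and "partition_on (V1 n p \<union> V2 n p m) P"
    and "\<forall>v\<in>V1 n p. int (errors S n p m P v) \<le> tol S n p m v"
    and "i \<in> {1..p}" and "j \<in> {1..p}" and "i \<noteq> j"
  shows "\<not> same_cluster P (XS i) (XS j)"
proof
  assume "same_cluster P (XS i) (XS j)"
  then obtain C where "C \<in> P" "XS i \<in> C" "XS j \<in> C"
    unfolding same_cluster_def by blast
  with assms(6,8,10) have "m \<le> errors S n p m P (XS i) + errors S n p m P (XS j)"
    by (intro errors_XS_same_cluster) (auto simp: partition_on_def)
  moreover have "XS i \<in> V1 n p" "XS j \<in> V1 n p"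
    using assms(8,9) unfolding V1_def by auto
  then have "errors S n p m P (XS i) \<le> 3" "errors S n p m P (XS j) \<le> 3"
    using assms(7) by force+
  ultimately show False
    using assms(1,2,5) by linarith
qed

end
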